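(* Let $a, b, n$ be positive integers with $b>1$, $n>1$ and $\gcd(r_b(n),a)=1$, and let $\Bbbk$ be a field. Let $\mathcal{L} \subseteq \mathbb{Z}^n$ be the subgroup generated by the $n-1$ vectors $b\,e_k - (b+1)\,e_{k+1} + e_{k+2}$ for $k = 1, \ldots, n-2$, together with $(a+1)\,e_1 + b\, e_{n-1} - (b+1)\, e_n$ (here $e_1,\dots,e_n$ is the standard basis of $\mathbb{Z}^n$). Then the kernel of the $\Bbbk$-algebra homomorphism $\Bbbk[x_1,\ldots,x_n] \to \Bbbk[t]$, $x_i \mapsto t^{a_i}$, is equal to the ideal generated by $\{x_1^{u_1}\cdots x_n^{u_n} - x_1^{v_1}\cdots x_n^{v_n} \mid u, v \in \mathbb{N}^n,\ u - v \in \mathcal{L}\}$.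
   Context: For an integer $\ell \ge 1$, $r_b(\ell) = \sum_{j=0}^{\ell-1} b^j$, and $r_b(0)=0$. For $i \ge 1$, $a_i := r_b(n) + a\, r_b(i-1)$; $S_a(b,n)$ is the numerical semigroup generated by $a_1,\ldots,a_n$. *)

theory Defs
  imports "HOL-Library.Poly_Mapping" "HOL-Computational_Algebra.Polynomial"
begin

definition rb :: "nat \<Rightarrow> nat \<Rightarrow> nat" where
  "rb b l = (\<Sum>j<l. b ^ j)"

text \<open>Generators a_i = r_b(n) + a r_b(i-1), i >= 1. Variables are 0-indexed:
  variable x_(i+1) of the paper is index i, with degree agen a b n i = a_(i+1).\<close>
definition agen :: "nat \<Rightarrow> nat \<Rightarrow> nat \<Rightarrow> nat \<Rightarrow> nat" where
  "agen a b n i = rb b n + a * rb b i"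

text \<open>Multivariate polynomials over 'k: finitely supported maps from exponent
  vectors (finitely supported maps variable index to exponent) to coefficients.
  k[x_1..x_n] is the subring of polynomials only involving variables 0..n-1.\<close>
definition polys_n :: "nat \<Rightarrow> ((nat \<Rightarrow>\<^sub>0 nat) \<Rightarrow>\<^sub>0 'k::field) set" where
  "polys_n n = {p. \<forall>u\<in>Poly_Mapping.keys p. Poly_Mapping.keys u \<subseteq> {..<n}}"

definition mono :: "(nat \<Rightarrow>\<^sub>0 nat) \<Rightarrow> ((nat \<Rightarrow>\<^sub>0 nat) \<Rightarrow>\<^sub>0 'k::field)" where
  "mono u = Poly_Mapping.single u 1"

definition evalt :: "nat \<Rightarrow> nat \<Rightarrow> nat \<Rightarrow> ((nat \<Rightarrow>\<^sub>0 nat) \<Rightarrow>\<^sub>0 'k::field) \<Rightarrow> 'k poly" where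
  "evalt a b n p = (\<Sum>u\<in>Poly_Mapping.keys p. monom (Poly_Mapping.lookup p u) (\<Sum>i<n. Poly_Mapping.lookup u i * agen a b n i))"

definition toric_kernel :: "nat \<Rightarrow> nat \<Rightarrow> nat \<Rightarrow> ((nat \<Rightarrow>\<^sub>0 nat) \<Rightarrow>\<^sub>0 'k::field) set" where
  "toric_kernel a b n = {p \<in> polys_n n. evalt a b n p = 0}"

definition ideal_gen :: "'r::comm_ring_1 set \<Rightarrow> 'r set \<Rightarrow> 'r set" where
  "ideal_gen R S = {\<Sum>j<m. c j * s j | (m::nat) c s. \<forall>j<m. c j \<in> R \<and> s j \<in> S}"

text \<open>Standard basis vector e_(i+1) of Z^n (0-indexed), vectors as nat \<Rightarrow> int.\<close>
definition evec :: "nat \<Rightarrow> nat \<Rightarrow> int" where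
  "evec i = (\<lambda>j. if j = i then 1 else 0)"

text \<open>The n-1 lattice generators (0-indexed): for k < n-2 the vector
  b e_(k+1) - (b+1) e_(k+2) + e_(k+3); for k = n-2 the vector
  (a+1) e_1 + b e_(n-1) - (b+1) e_n.\<close>
definition lgen :: "nat \<Rightarrow> nat \<Rightarrow> nat \<Rightarrow> nat \<Rightarrow> nat \<Rightarrow> int" where
  "lgen a b n k = (if k < n - 2
      then (\<lambda>j. int b * evec k j - int (b + 1) * evec (k + 1) j + evec (k + 2) j)
      else (\<lambda>j. int (a + 1) * evec 0 j + int b * evec (n - 2) j - int (b + 1) * evec (n - 1) j))"

definition lattice :: "nat \<Rightarrow> nat \<Rightarrow> nat \<Rightarrow> (nat \<Rightarrow> int) set" where
  "lattice a b n = {(\<lambda>j. \<Sum>k<n - 1. c k * lgen a b n k j) | c. True}"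

definition lattice_binomials :: "nat \<Rightarrow> nat \<Rightarrow> nat \<Rightarrow> ((nat \<Rightarrow>\<^sub>0 nat) \<Rightarrow>\<^sub>0 'k::field) set" where
  "lattice_binomials a b n = {mono u - mono v | u v.
      Poly_Mapping.keys u \<subseteq> {..<n} \<and> Poly_Mapping.keys v \<subseteq> {..<n} \<and>
      (\<lambda>j. int (Poly_Mapping.lookup u j) - int (Poly_Mapping.lookup v j)) \<in> lattice a b n}"

end

theory Submission
  imports Defs
begin

text \<open>
  The kernel of the monomial map \<open>x\<^sub>i \<mapsto> t\<^bsup>w\<^sub>i\<^esup>\<close> is generated by the binomials
  \<open>x\<^sup>u - x\<^sup>v\<close> of equal weighted degree: in a kernel element every term has a partner
  of the same degree, and cancelling a term against it strictly shrinks the support.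
  It remains to see that \<open>L\<close> consists exactly of the integer relations \<open>\<Sum> v\<^sub>j a\<^sub>j = 0\<close>.
  With \<open>R = r\<^sub>b(n)\<close> one has \<open>a\<^sub>j = R (1 - r\<^sub>b(j-1)) + (R + a) r\<^sub>b(j-1)\<close>, so
  \<open>\<Sum> v\<^sub>j a\<^sub>j = R proj\<^sub>0(v) + (R + a) proj\<^sub>1(v)\<close> for two linear forms that are dual to
  \<open>e\<^sub>1, e\<^sub>2\<close> and vanish on the first \<open>n - 2\<close> generators. Those generators end in the
  entry 1, so modulo them every vector reduces to one supported on \<open>e\<^sub>1, e\<^sub>2\<close>; hence they
  span the common kernel of \<open>proj\<^sub>0, proj\<^sub>1\<close>. For a relation, coprimality of \<open>R\<close> and \<open>a\<close>
  forces \<open>(proj\<^sub>0, proj\<^sub>1)(v) = -q (a + R, -R)\<close>, which is \<open>-q\<close> times the value at the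
  last generator.
\<close>

section \<open>The lattice as the module of relations among the \<open>a\<^sub>i\<close>\<close>

lemma rb_Suc: "rb b (Suc l) = b * rb b l + 1"
  unfolding rb_def sum.lessThan_Suc_shift by (simp add: sum_distrib_left)

lemma rb_0 [simp]: "rb b 0 = 0"
  by (simp add: rb_def)

definition linform :: "nat \<Rightarrow> (nat \<Rightarrow> int) \<Rightarrow> (nat \<Rightarrow> int) \<Rightarrow> int" where
  "linform n f v = (\<Sum>j<n. f j * v j)"

lemma linform_add_scaled: "linform n f (\<lambda>j. v j + c * w j) = linform n f v + c * linform n f w"
  by (simp add: linform_def sum.distrib sum_distrib_left algebra_simps)

lemma linform_combination:
  "linform n f (\<lambda>j. \<Sum>k<m. c k * v k j) = (\<Sum>k<m. c k * linform n f (v k))"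
  unfolding linform_def by (simp add: sum_distrib_left sum_distrib_right sum.swap[of _ "{..<n}"] algebra_simps)

lemma linform_evec: "k < n \<Longrightarrow> linform n f (evec k) = f k"
  by (simp add: linform_def evec_def if_distrib cong: if_cong)

lemma linform_evec3:
  assumes "i < n" "k < n" "l < n"
  shows "linform n f (\<lambda>j. x * evec i j + y * evec k j + z * evec l j) = x * f i + y * f k + z * f l"
proof -
  have "linform n f (\<lambda>j. x * evec i j + y * evec k j + z * evec l j)
      = x * linform n f (evec i) + y * linform n f (evec k) + z * linform n f (evec l)"
    by (simp add: linform_def sum.distrib sum_distrib_left algebra_simps)
  then show ?thesis using assms by (simp add: linform_evec)
qed

lemma linform_lgen:
  assumes "k < n - 2"
  shows "linform n f (lgen a b n k) = int b * f k - int (b + 1) * f (k + 1) + f (k + 2)"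
proof -
  have "linform n f (lgen a b n k)
      = linform n f (\<lambda>j. int b * evec k j + (- int (b + 1)) * evec (k + 1) j + 1 * evec (k + 2) j)"
    using assms by (auto simp: lgen_def algebra_simps)
  also have "\<dots> = int b * f k + (- int (b + 1)) * f (k + 1) + 1 * f (k + 2)"
    using assms by (intro linform_evec3) auto
  finally show ?thesis by (simp add: algebra_simps)
qed

lemma linform_lgen_last:
  assumes "n > 1"
  shows "linform n f (lgen a b n (n - 2)) = int (a + 1) * f 0 + int b * f (n - 2) - int (b + 1) * f (n - 1)"
proof -
  have "linform n f (lgen a b n (n - 2))
      = linform n f (\<lambda>j. int (a + 1) * evec 0 j + int b * evec (n - 2) j + (- int (b + 1)) * evec (n - 1) j)"
    by (auto simp: lgen_def algebra_simps)
  also have "\<dots> = int (a + 1) * f 0 + int b * f (n - 2) + (- int (b + 1)) * f (n - 1)"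
    using assms by (intro linform_evec3) auto
  finally show ?thesis by (simp add: algebra_simps)
qed

lemma linform_supported_01:
  assumes "n > 1" "\<forall>j\<ge>2. v j = 0"
  shows "linform n f v = f 0 * v 0 + f 1 * v 1"
proof -
  have "linform n f v = (\<Sum>j<2. f j * v j)"
    unfolding linform_def using assms by (intro sum.mono_neutral_right) auto
  then show ?thesis by (simp add: numeral_2_eq_2)
qed

definition proj0 :: "nat \<Rightarrow> nat \<Rightarrow> (nat \<Rightarrow> int) \<Rightarrow> int" where
  "proj0 b n = linform n (\<lambda>j. 1 - int (rb b j))"

definition proj1 :: "nat \<Rightarrow> nat \<Rightarrow> (nat \<Rightarrow> int) \<Rightarrow> int" where
  "proj1 b n = linform n (\<lambda>j. int (rb b j))"

lemma proj_lgen: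
  assumes "k < n - 2"
  shows "proj0 b n (lgen a b n k) = 0" "proj1 b n (lgen a b n k) = 0"
  using assms by (simp_all add: proj0_def proj1_def linform_lgen rb_Suc algebra_simps)

lemma proj_lgen_last:
  assumes "n > 1"
  shows "proj0 b n (lgen a b n (n - 2)) = int a + int (rb b n)"
    and "proj1 b n (lgen a b n (n - 2)) = - int (rb b n)"
proof -
  obtain k where n: "n = Suc (Suc k)"
    using assms by (metis Suc_diff_Suc diff_Suc_1 less_imp_Suc_add)
  then have "n - 2 = k" "n - 1 = Suc k" by simp_all
  then show "proj0 b n (lgen a b n (n - 2)) = int a + int (rb b n)"
    and "proj1 b n (lgen a b n (n - 2)) = - int (rb b n)"
    unfolding proj0_def proj1_def linform_lgen_last[OF assms] by (simp_all add: n rb_Suc algebra_simps)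
qed

lemma linform_agen:
  "linform n (\<lambda>j. int (agen a b n j)) v = int (rb b n) * proj0 b n v + (int (rb b n) + int a) * proj1 b n v"
proof -
  have "linform n (\<lambda>j. int (agen a b n j)) v
      = (\<Sum>j<n. int (rb b n) * ((1 - int (rb b j)) * v j) + (int (rb b n) + int a) * (int (rb b j) * v j))"
    unfolding linform_def by (rule sum.cong) (simp_all add: agen_def algebra_simps)
  then show ?thesis
    by (simp add: proj0_def proj1_def linform_def sum.distrib sum_distrib_left)
qed

lemma combination_in_lattice: "(\<lambda>j. \<Sum>k<n - 1. c k * lgen a b n k j) \<in> lattice a b n"
  unfolding lattice_def by auto

lemma zero_in_lattice: "(\<lambda>j. 0) \<in> lattice a b n"
  using combination_in_lattice[of "\<lambda>k. 0"] by simp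

lemma lattice_add_scaled:
  assumes "v \<in> lattice a b n" "w \<in> lattice a b n"
  shows "(\<lambda>j. v j + m * w j) \<in> lattice a b n"
proof -
  obtain c d where "v = (\<lambda>j. \<Sum>k<n - 1. c k * lgen a b n k j)"
    and "w = (\<lambda>j. \<Sum>k<n - 1. d k * lgen a b n k j)"
    using assms unfolding lattice_def by blast
  then have "(\<lambda>j. v j + m * w j) = (\<lambda>j. \<Sum>k<n - 1. (c k + m * d k) * lgen a b n k j)"
    by (simp add: sum.distrib sum_distrib_left algebra_simps)
  then show ?thesis by (simp only: combination_in_lattice)
qed

lemma lgen_in_lattice:
  assumes "k < n - 1"
  shows "lgen a b n k \<in> lattice a b n"
proof -
  have "lgen a b n k = (\<lambda>j. \<Sum>i<n - 1. (if i = k then 1 else 0) * lgen a b n i j)"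
    using assms by (simp add: fun_eq_iff if_distrib[of "\<lambda>c. c * _"] cong: if_cong)
  then show ?thesis by (simp only: combination_in_lattice)
qed

lemma lattice_supported:
  assumes "n > 1" "v \<in> lattice a b n" "j \<ge> n"
  shows "v j = 0"
proof -
  have "lgen a b n k j = 0" for k
    using assms(1,3) by (auto simp: lgen_def evec_def)
  then show ?thesis using assms(2) unfolding lattice_def by auto
qed

lemma lattice_in_kernel:
  assumes "n > 1" "v \<in> lattice a b n"
  shows "linform n (\<lambda>j. int (agen a b n j)) v = 0"
proof -
  have "linform n (\<lambda>j. int (agen a b n j)) (lgen a b n k) = 0" if "k < n - 1" for k
  proof (cases "k < n - 2")
    case True
    then show ?thesis by (simp add: linform_agen proj_lgen)
  next
    case False
    with that have "k = n - 2" by simp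
    then show ?thesis by (simp add: linform_agen proj_lgen_last[OF assms(1)] algebra_simps)
  qed
  then show ?thesis
    using assms(2) unfolding lattice_def by (auto simp: linform_combination)
qed

lemma supported_proj_zero_in_lattice:
  assumes "n > 1" "m \<le> n" "\<forall>j\<ge>m. v j = 0" "proj0 b n v = 0" "proj1 b n v = 0"
  shows "v \<in> lattice a b n"
  using assms(2-)
proof (induction m arbitrary: v)
  case 0
  then show ?case by (simp add: zero_in_lattice)
next
  case (Suc m)
  show ?case
  proof (cases "m < 2")
    case True
    with Suc.prems have v01: "\<forall>j\<ge>2. v j = 0" by auto
    then have "v 0 = 0" "v 1 = 0"
      using Suc.prems(3,4) by (simp_all add: proj0_def proj1_def linform_supported_01[OF assms(1)] rb_Suc)
    with v01 have "v = (\<lambda>j. 0)"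
      by (metis less_2_cases_iff not_le One_nat_def)
    then show ?thesis by (simp add: zero_in_lattice)
  next
    case False
    define g where "g = lgen a b n (m - 2)"
    have m: "m - 2 < n - 2" "m - 2 + 2 = m" using False Suc.prems(1) by auto
    have g: "g m = 1" "\<forall>j>m. g j = 0"
      using False by (auto simp: g_def lgen_def evec_def m)
    define v' where "v' = (\<lambda>j. v j + (- v m) * g j)"
    have "v' \<in> lattice a b n"
    proof (rule Suc.IH)
      show "\<forall>j\<ge>m. v' j = 0"
      proof (intro allI impI)
        fix j assume "m \<le> j"
        then consider "j = m" | "j \<ge> Suc m" by linarith
        then show "v' j = 0" using Suc.prems(2) g by cases (auto simp: v'_def)
      qed
      show "proj0 b n v' = 0" "proj1 b n v' = 0"
        using Suc.prems(3,4) proj_lgen[OF m(1)]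
        unfolding v'_def g_def proj0_def proj1_def linform_add_scaled by simp_all
    qed (use Suc.prems(1) in simp)
    moreover have "g \<in> lattice a b n"
      using m(1) by (simp add: g_def lgen_in_lattice)
    ultimately have "(\<lambda>j. v' j + v m * g j) \<in> lattice a b n"
      by (rule lattice_add_scaled)
    then show ?thesis by (simp add: v'_def)
  qed
qed

lemma coprime_linear_relation:
  fixes R a x y :: int
  assumes "coprime R a" "R \<noteq> 0" "R * x + (R + a) * y = 0"
  obtains q where "y = R * q" "x + (R + a) * q = 0"
proof -
  have "a * y = R * (- x - y)"
    using assms(3) by (simp add: algebra_simps)
  then have "R dvd a * y" by simp
  with assms(1) obtain q where q: "y = R * q"
    using coprime_dvd_mult_right_iff by blast
  have "R * (x + (R + a) * q) = 0"
    using assms(3) q by (simp add: algebra_simps)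
  with assms(2) q that show thesis
    by simp
qed

theorem lattice_eq_kernel:
  assumes "n > 1" "coprime (rb b n) a"
  shows "lattice a b n = {v. (\<forall>j\<ge>n. v j = 0) \<and> linform n (\<lambda>j. int (agen a b n j)) v = 0}"
proof (intro equalityI subsetI CollectI conjI allI impI)
  fix v assume "v \<in> lattice a b n"
  then show "v j = 0" if "j \<ge> n" for j
    using lattice_supported[OF assms(1)] that by blast
  show "linform n (\<lambda>j. int (agen a b n j)) v = 0"
    using lattice_in_kernel[OF assms(1) \<open>v \<in> lattice a b n\<close>] .
next
  fix v assume "v \<in> {v. (\<forall>j\<ge>n. v j = 0) \<and> linform n (\<lambda>j. int (agen a b n j)) v = 0}"
  then have supp: "\<forall>j\<ge>n. v j = 0"
    and ker: "int (rb b n) * proj0 b n v + (int (rb b n) + int a) * proj1 b n v = 0"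
    by (simp_all add: linform_agen)
  define R where "R = int (rb b n)"
  have "rb b n > 0"
    using assms(1) by (cases n) (simp_all add: rb_Suc)
  moreover have "coprime R (int a)"
    using assms(2) by (simp add: R_def)
  ultimately obtain q where q: "proj1 b n v = R * q" and p: "proj0 b n v + (R + int a) * q = 0"
    using ker by (elim coprime_linear_relation) (simp_all add: R_def)
  define g where "g = lgen a b n (n - 2)"
  have g: "g \<in> lattice a b n"
    using assms(1) by (simp add: g_def lgen_in_lattice)
  have "(\<lambda>j. v j + q * g j) \<in> lattice a b n"
  proof (rule supported_proj_zero_in_lattice[OF assms(1) order_refl])
    show "\<forall>j\<ge>n. v j + q * g j = 0"
      using supp lattice_supported[OF assms(1) g] by simp
    show "proj0 b n (\<lambda>j. v j + q * g j) = 0" "proj1 b n (\<lambda>j. v j + q * g j) = 0"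
      using p q proj_lgen_last[OF assms(1), of b a]
      unfolding proj0_def proj1_def linform_add_scaled g_def by (simp_all add: R_def algebra_simps)
  qed
  from lattice_add_scaled[OF this g, of "- q"] show "v \<in> lattice a b n"
    by simp
qed

section \<open>Toric ideals of monomial curves\<close>

lemma ideal_gen_0: "0 \<in> ideal_gen R S"
  unfolding ideal_gen_def by (rule CollectI, rule exI[of _ 0]) auto

lemma ideal_gen_mult_gen: "c \<in> R \<Longrightarrow> s \<in> S \<Longrightarrow> c * s \<in> ideal_gen R S"
  unfolding ideal_gen_def
  by (rule CollectI, rule exI[of _ 1], rule exI[of _ "\<lambda>_. c"], rule exI[of _ "\<lambda>_. s"]) auto

lemma ideal_gen_add:
  assumes "x \<in> ideal_gen R S" "y \<in> ideal_gen R S"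
  shows "x + y \<in> ideal_gen R S"
proof -
  obtain m1 :: nat and c1 s1 where x: "x = (\<Sum>j<m1. c1 j * s1 j)" "\<forall>j<m1. c1 j \<in> R \<and> s1 j \<in> S"
    using assms(1) unfolding ideal_gen_def by blast
  obtain m2 :: nat and c2 s2 where y: "y = (\<Sum>j<m2. c2 j * s2 j)" "\<forall>j<m2. c2 j \<in> R \<and> s2 j \<in> S"
    using assms(2) unfolding ideal_gen_def by blast
  define c where "c j = (if j < m1 then c1 j else c2 (j - m1))" for j
  define s where "s j = (if j < m1 then s1 j else s2 (j - m1))" for j
  have "(\<Sum>j<m1 + m. c j * s j) = (\<Sum>j<m1. c j * s j) + (\<Sum>j<m. c (m1 + j) * s (m1 + j))" for m
    by (induction m) (simp_all add: add.assoc)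
  then have "x + y = (\<Sum>j<m1 + m2. c j * s j)"
    unfolding x y by (simp add: c_def s_def)
  moreover have "\<forall>j<m1 + m2. c j \<in> R \<and> s j \<in> S"
    using x y by (auto simp: c_def s_def)
  ultimately show ?thesis unfolding ideal_gen_def by blast
qed

lemma ideal_gen_least:
  assumes "0 \<in> X" "\<And>x y. x \<in> X \<Longrightarrow> y \<in> X \<Longrightarrow> x + y \<in> X"
    and "\<And>c s. c \<in> R \<Longrightarrow> s \<in> S \<Longrightarrow> c * s \<in> X"
  shows "ideal_gen R S \<subseteq> X"
proof
  fix x assume "x \<in> ideal_gen R S"
  then obtain m :: nat and c s where "x = (\<Sum>j<m. c j * s j)" "\<forall>j<m. c j \<in> R \<and> s j \<in> S"
    unfolding ideal_gen_def by blast
  then show "x \<in> X"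
    using assms by (induction m arbitrary: x) auto
qed

lemma polys_n_add: "p \<in> polys_n n \<Longrightarrow> q \<in> polys_n n \<Longrightarrow> p + q \<in> polys_n n"
  unfolding polys_n_def using keys_add[of p q] by blast

lemma polys_n_diff: "p \<in> polys_n n \<Longrightarrow> q \<in> polys_n n \<Longrightarrow> p - q \<in> polys_n n"
  unfolding polys_n_def using keys_diff[of p q] by blast

lemma polys_n_const: "Poly_Mapping.single 0 c \<in> polys_n n"
  by (simp add: polys_n_def)

lemma polys_n_mult_mono:
  assumes "c \<in> polys_n n" "Poly_Mapping.keys u \<subseteq> {..<n}"
  shows "c * mono u \<in> polys_n n"
  unfolding polys_n_def
proof (intro CollectI ballI)
  fix w assume "w \<in> Poly_Mapping.keys (c * mono u)"
  then obtain x y where "w = x + y" "x \<in> Poly_Mapping.keys c"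
    and "y \<in> Poly_Mapping.keys (mono u :: _ \<Rightarrow>\<^sub>0 'a)"
    using keys_mult[of c "mono u"] by blast
  then show "Poly_Mapping.keys w \<subseteq> {..<n}"
    using assms keys_add[of x y] by (auto simp: polys_n_def mono_def split: if_splits)
qed

definition wdeg :: "(nat \<Rightarrow> nat) \<Rightarrow> nat \<Rightarrow> (nat \<Rightarrow>\<^sub>0 nat) \<Rightarrow> nat" where
  "wdeg w n u = (\<Sum>i<n. Poly_Mapping.lookup u i * w i)"

definition monomial_curve_eval ::
    "(nat \<Rightarrow> nat) \<Rightarrow> nat \<Rightarrow> ((nat \<Rightarrow>\<^sub>0 nat) \<Rightarrow>\<^sub>0 'k::field) \<Rightarrow> 'k poly" where
  "monomial_curve_eval w n p =
     (\<Sum>u\<in>Poly_Mapping.keys p. monom (Poly_Mapping.lookup p u) (wdeg w n u))"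

lemma wdeg_add: "wdeg w n (u + v) = wdeg w n u + wdeg w n v"
  by (simp add: wdeg_def lookup_add sum.distrib algebra_simps)

lemma monomial_curve_eval_0 [simp]: "monomial_curve_eval w n 0 = 0"
  by (simp add: monomial_curve_eval_def)

lemma monomial_curve_eval_single:
  "monomial_curve_eval w n (Poly_Mapping.single u c) = monom c (wdeg w n u)"
  by (simp add: monomial_curve_eval_def)

lemma monomial_curve_eval_add:
  "monomial_curve_eval w n (p + q) = monomial_curve_eval w n p + monomial_curve_eval w n q"
  unfolding monomial_curve_eval_def
  by (rule setsum_keys_plus_distrib[where f = "\<lambda>u c. monom c (wdeg w n u)"])
    (simp_all add: add_monom)

lemma monomial_curve_eval_uminus: "monomial_curve_eval w n (- p) = - monomial_curve_eval w n p"
  by (simp add: monomial_curve_eval_def lookup_uminus sum_negf minus_monom[symmetric])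

lemma monomial_curve_eval_diff:
  "monomial_curve_eval w n (p - q) = monomial_curve_eval w n p - monomial_curve_eval w n q"
  using monomial_curve_eval_add[of w n p "- q"] by (simp add: monomial_curve_eval_uminus)

lemma monomial_curve_eval_sum:
  "monomial_curve_eval w n (sum f A) = (\<Sum>x\<in>A. monomial_curve_eval w n (f x))"
  by (induction A rule: infinite_finite_induct)
    (simp_all add: monomial_curve_eval_add)

lemma poly_mapping_sum_single:
  "p = (\<Sum>u\<in>Poly_Mapping.keys p. Poly_Mapping.single u (Poly_Mapping.lookup p u))"
  by (rule poly_mapping_eqI) (simp add: lookup_sum lookup_single when_def in_keys_iff)

lemma monomial_curve_eval_mult_mono:
  "monomial_curve_eval w n (c * mono u) = monomial_curve_eval w n c * monom 1 (wdeg w n u)"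
proof -
  have "c * mono u = (\<Sum>v\<in>Poly_Mapping.keys c. Poly_Mapping.single (v + u) (Poly_Mapping.lookup c v))"
    by (subst poly_mapping_sum_single[of c]) (simp add: sum_distrib_right mono_def mult_single)
  then have "monomial_curve_eval w n (c * mono u)
      = (\<Sum>v\<in>Poly_Mapping.keys c. monom (Poly_Mapping.lookup c v) (wdeg w n v) * monom 1 (wdeg w n u))"
    by (simp add: monomial_curve_eval_sum monomial_curve_eval_single wdeg_add mult_monom)
  then show ?thesis
    by (simp add: monomial_curve_eval_def sum_distrib_right)
qed

lemma coeff_monomial_curve_eval:
  "coeff (monomial_curve_eval w n p) d = (\<Sum>u\<in>{u \<in> Poly_Mapping.keys p. wdeg w n u = d}. Poly_Mapping.lookup p u)"
  by (simp add: monomial_curve_eval_def coeff_sum sum.inter_filter)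

definition equal_degree_binomials ::
    "(nat \<Rightarrow> nat) \<Rightarrow> nat \<Rightarrow> ((nat \<Rightarrow>\<^sub>0 nat) \<Rightarrow>\<^sub>0 'k::field) set" where
  "equal_degree_binomials w n = {mono u - mono v | u v.
      Poly_Mapping.keys u \<subseteq> {..<n} \<and> Poly_Mapping.keys v \<subseteq> {..<n} \<and> wdeg w n u = wdeg w n v}"

lemma polys_n_mult_binomial:
  assumes "c \<in> polys_n n" "Poly_Mapping.keys u \<subseteq> {..<n}" "Poly_Mapping.keys v \<subseteq> {..<n}"
  shows "c * (mono u - mono v) \<in> polys_n n"
  using assms by (simp add: right_diff_distrib polys_n_diff polys_n_mult_mono)

lemma monomial_curve_eval_mult_binomial:
  "wdeg w n u = wdeg w n v \<Longrightarrow> monomial_curve_eval w n (c * (mono u - mono v)) = 0"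
  by (simp add: right_diff_distrib monomial_curve_eval_diff monomial_curve_eval_mult_mono)

lemma binomial_ideal_subset_kernel:
  "ideal_gen (polys_n n) (equal_degree_binomials w n) \<subseteq> {p \<in> polys_n n. monomial_curve_eval w n p = 0}"
proof (rule ideal_gen_least)
  show "0 \<in> {p \<in> polys_n n. monomial_curve_eval w n p = 0}"
    by (simp add: polys_n_def)
  show "x + y \<in> {p \<in> polys_n n. monomial_curve_eval w n p = 0}"
    if "x \<in> {p \<in> polys_n n. monomial_curve_eval w n p = 0}" "y \<in> {p \<in> polys_n n. monomial_curve_eval w n p = 0}"
    for x y :: "(nat \<Rightarrow>\<^sub>0 nat) \<Rightarrow>\<^sub>0 'a"
    using that by (simp add: polys_n_add monomial_curve_eval_add)
  show "c * s \<in> {p \<in> polys_n n. monomial_curve_eval w n p = 0}"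
    if "c \<in> polys_n n" "s \<in> equal_degree_binomials w n" for c s :: "(nat \<Rightarrow>\<^sub>0 nat) \<Rightarrow>\<^sub>0 'a"
    using that by (auto simp: equal_degree_binomials_def polys_n_mult_binomial monomial_curve_eval_mult_binomial)
qed

lemma equal_degree_partner:
  assumes "monomial_curve_eval w n p = 0" "u \<in> Poly_Mapping.keys p"
  obtains v where "v \<in> Poly_Mapping.keys p" "v \<noteq> u" "wdeg w n v = wdeg w n u"
proof -
  have "(\<Sum>v\<in>{v \<in> Poly_Mapping.keys p. wdeg w n v = wdeg w n u}. Poly_Mapping.lookup p v) = 0"
    using coeff_monomial_curve_eval[of w n p "wdeg w n u"] assms(1) by simp
  moreover have "Poly_Mapping.lookup p u \<noteq> 0"
    using assms(2) by (simp add: in_keys_iff)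
  ultimately have "{v \<in> Poly_Mapping.keys p. wdeg w n v = wdeg w n u} \<noteq> {u}"
    by auto
  then show thesis
    using that assms(2) by blast
qed

lemma keys_cancel_binomial:
  assumes "u \<noteq> v" "v \<in> Poly_Mapping.keys p"
  shows "Poly_Mapping.keys (p - Poly_Mapping.single 0 (Poly_Mapping.lookup p u) * (mono u - mono v))
    \<subseteq> Poly_Mapping.keys p - {u}"
proof -
  have binomial: "Poly_Mapping.single 0 (Poly_Mapping.lookup p u) * (mono u - mono v)
      = Poly_Mapping.single u (Poly_Mapping.lookup p u) - Poly_Mapping.single v (Poly_Mapping.lookup p u)"
    by (simp add: mono_def right_diff_distrib mult_single)
  show ?thesis
    unfolding binomial using assms by (auto simp: in_keys_iff lookup_minus lookup_single when_def split: if_splits)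
qed

lemma kernel_subset_binomial_ideal:
  fixes p :: "(nat \<Rightarrow>\<^sub>0 nat) \<Rightarrow>\<^sub>0 'k::field"
  assumes "p \<in> polys_n n" "monomial_curve_eval w n p = 0"
  shows "p \<in> ideal_gen (polys_n n) (equal_degree_binomials w n)"
  using assms
proof (induction "card (Poly_Mapping.keys p)" arbitrary: p rule: less_induct)
  case less
  show ?case
  proof (cases "p = 0")
    case True
    then show ?thesis by (simp add: ideal_gen_0)
  next
    case False
    then obtain u where u: "u \<in> Poly_Mapping.keys p"
      by (metis ex_in_conv keys_eq_empty)
    with less.prems(2) obtain v where v: "v \<in> Poly_Mapping.keys p" "v \<noteq> u" "wdeg w n v = wdeg w n u"
      by (rule equal_degree_partner)
    have uv: "Poly_Mapping.keys u \<subseteq> {..<n}" "Poly_Mapping.keys v \<subseteq> {..<n}"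
      using less.prems(1) u v(1) by (auto simp: polys_n_def)
    define c :: "(nat \<Rightarrow>\<^sub>0 nat) \<Rightarrow>\<^sub>0 'k" where "c = Poly_Mapping.single 0 (Poly_Mapping.lookup p u)"
    have "mono u - mono v \<in> equal_degree_binomials w n"
      using uv v(3)[symmetric] unfolding equal_degree_binomials_def by blast
    then have cuv: "c * (mono u - mono v) \<in> ideal_gen (polys_n n) (equal_degree_binomials w n)"
      unfolding c_def by (intro ideal_gen_mult_gen polys_n_const)
    have "p - c * (mono u - mono v) \<in> ideal_gen (polys_n n) (equal_degree_binomials w n)"
    proof (rule less.hyps)
      have "Poly_Mapping.keys (p - c * (mono u - mono v)) \<subseteq> Poly_Mapping.keys p - {u}"
        unfolding c_def using v by (intro keys_cancel_binomial) auto
      then show "card (Poly_Mapping.keys (p - c * (mono u - mono v))) < card (Poly_Mapping.keys p)"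
        using u by (meson card_Diff1_less card_mono finite_Diff finite_keys le_less_trans)
      show "p - c * (mono u - mono v) \<in> polys_n n"
        using less.prems(1) uv by (simp add: c_def polys_n_diff polys_n_mult_binomial polys_n_const)
      show "monomial_curve_eval w n (p - c * (mono u - mono v)) = 0"
        using less.prems(2) v(3) by (simp add: monomial_curve_eval_diff monomial_curve_eval_mult_binomial)
    qed
    from ideal_gen_add[OF this cuv] show ?thesis
      by simp
  qed
qed

theorem monomial_curve_kernel_eq_binomial_ideal:
  "{p \<in> polys_n n. monomial_curve_eval w n p = 0} = ideal_gen (polys_n n) (equal_degree_binomials w n)"
  using kernel_subset_binomial_ideal binomial_ideal_subset_kernel by blast

section \<open>Lattice binomials are the equal-degree binomials\<close>

lemma evalt_eq_monomial_curve_eval: "evalt a b n = monomial_curve_eval (agen a b n) n"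
  by (simp add: fun_eq_iff evalt_def monomial_curve_eval_def wdeg_def)

lemma linform_exponent_diff:
  "linform n (\<lambda>j. int (w j)) (\<lambda>j. int (Poly_Mapping.lookup u j) - int (Poly_Mapping.lookup v j))
    = int (wdeg w n u) - int (wdeg w n v)"
  by (simp add: linform_def wdeg_def sum_subtractf algebra_simps)

lemma lattice_binomials_eq_equal_degree_binomials:
  assumes "n > 1" "coprime (rb b n) a"
  shows "lattice_binomials a b n = equal_degree_binomials (agen a b n) n"
proof -
  have "(\<lambda>j. int (Poly_Mapping.lookup u j) - int (Poly_Mapping.lookup v j)) \<in> lattice a b n
      \<longleftrightarrow> wdeg (agen a b n) n u = wdeg (agen a b n) n v"
    if "Poly_Mapping.keys u \<subseteq> {..<n}" "Poly_Mapping.keys v \<subseteq> {..<n}" for u v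
  proof -
    have "\<forall>j\<ge>n. int (Poly_Mapping.lookup u j) - int (Poly_Mapping.lookup v j) = 0"
      using that by (metis in_keys_iff lessThan_iff not_le subsetD diff_self of_nat_0)
    then show ?thesis
      by (simp add: lattice_eq_kernel[OF assms] linform_exponent_diff)
  qed
  then show ?thesis
    unfolding lattice_binomials_def equal_degree_binomials_def by blast
qed

theorem corollary11:
  fixes a b n :: nat
  assumes "a > 0" and "b > 1" and "n > 1" and "gcd (rb b n) a = 1"
  shows "(toric_kernel a b n :: ((nat \<Rightarrow>\<^sub>0 nat) \<Rightarrow>\<^sub>0 'k::field) set)
         = ideal_gen (polys_n n) (lattice_binomials a b n)"
proof -
  have "coprime (rb b n) a"
    using assms(4) by (simp add: coprime_iff_gcd_eq_1)
  with assms(3) show ?thesis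
    by (simp add: toric_kernel_def evalt_eq_monomial_curve_eval lattice_binomials_eq_equal_degree_binomials
        monomial_curve_kernel_eq_binomial_ideal)
qed

end
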